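(* Let $\lambda\neq0$ be real and $n,k\ge0$ integers. Then $$\sum_{j=0}^{n}\binom{n+k}{j}S_{2,\lambda}^{[2]}(n-j+k,2k)\,\beta_{j,\lambda}^{(k)}=\binom{n+k}{k}\sum_{j=0}^{k}\binom{k}{j}(-1)^{k-j}\beta_{n,\lambda}^{(k-j)}.$$
   Context: For real $\lambda\neq0$, $(x)_{0,\lambda}=1$, $(x)_{n,\lambda}=x(x-\lambda)\cdots(x-(n-1)\lambda)$ for $n\ge1$; $e_{\lambda}(t)=\sum_{k\ge0}(1)_{k,\lambda}\frac{t^k}{k!}=(1+\lambda t)^{1/\lambda}$ (formal power series). The $2$-truncated degenerate Stirling numbers of the second kind: for $k\ge0$, $\frac{1}{k!}(e_\lambda(t)-1-t)^k=\sum_{n\ge 2k}S^{[2]}_{2,\lambda}(n,2k)\frac{t^n}{n!}$, with $S^{[2]}_{2,\lambda}(n,2k)=0$ for $0\le n<2k$. The degenerate Bernoulli numbers of order $\alpha$ (a nonnegative integer here): $\big(\frac{t}{e_\lambda(t)-1}\big)^\alpha=\sum_{n\ge0}\beta^{(\alpha)}_{n,\lambda}\frac{t^n}{n!}$; in particular $\beta^{(0)}_{n,\lambda}=1$ if $n=0$ and $0$ otherwise. *)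

theory Defs
  imports "HOL-Computational_Algebra.Formal_Power_Series"
begin

definition dfall :: "real \<Rightarrow> real \<Rightarrow> nat \<Rightarrow> real" where
  "dfall lam x n = (\<Prod>i<n. x - of_nat i * lam)"

definition deg_exp :: "real \<Rightarrow> real fps" where
  "deg_exp lam = Abs_fps (\<lambda>k. dfall lam 1 k / fact k)"

text \<open>trunc_S2 lam n k is the 2-truncated degenerate Stirling number S^{[2]}_{2,lambda}(n, 2k):
  (e_lambda(t) - 1 - t)^k / k! = sum_n S(n,2k) t^n / n!.\<close>
definition trunc_S2 :: "real \<Rightarrow> nat \<Rightarrow> nat \<Rightarrow> real" where
  "trunc_S2 lam n k = fact n * fps_nth ((deg_exp lam - 1 - fps_X) ^ k / fps_const (fact k)) n"

definition deg_bernoulli :: "real \<Rightarrow> nat \<Rightarrow> nat \<Rightarrow> real" where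
  "deg_bernoulli lam alpha n = fact n * fps_nth ((fps_X / (deg_exp lam - 1)) ^ alpha) n"

end

theory Submission
  imports Defs
begin

unbundle fps_syntax

text \<open>With \<open>E = e\<^sub>\<lambda>(t) - 1\<close>, \<open>B = t / E\<close> and \<open>F = E - t\<close> one has \<open>B F = t (1 - B)\<close>, hence
  \<open>B\<^sup>k F\<^sup>k = t\<^sup>k (1 - B)\<^sup>k\<close>. The coefficient of \<open>t\<^sup>n\<^sup>+\<^sup>k\<close> on the left is a Cauchy product
  of degenerate Bernoulli and truncated Stirling numbers (only \<open>i \<le> n\<close> contribute, since \<open>F\<^sup>k\<close>
  starts at \<open>t\<^sup>k\<close>); on the right the binomial theorem gives Bernoulli numbers of lower order.\<close>

lemma fps_X_divide_times_self:
  fixes E :: "'a::field fps"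
  assumes "E $ 0 = 0" and "E $ 1 \<noteq> 0"
  shows "fps_X / E * E = fps_X"
proof (rule fps_times_divide_eq)
  show "E \<noteq> 0" using assms(2) by auto
  have "subdegree E \<le> 1" using assms(2) by (intro subdegree_leI) simp
  then show "subdegree E \<le> subdegree (fps_X :: 'a fps)" by simp
qed

lemma fps_mult_power_nth_offset:
  fixes G F :: "'a::comm_semiring_1 fps"
  assumes "F $ 0 = 0"
  shows "(G * F ^ k) $ (n + k) = (\<Sum>i=0..n. G $ i * F ^ k $ (n + k - i))"
proof -
  have "(G * F ^ k) $ (n + k) = (\<Sum>i=0..n+k. G $ i * F ^ k $ (n + k - i))"
    by (rule fps_mult_nth)
  also have "\<dots> = (\<Sum>i=0..n. G $ i * F ^ k $ (n + k - i))"
    by (rule sum.mono_neutral_right)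
       (use startsby_zero_power_prefix[OF assms, of k] in auto)
  finally show ?thesis .
qed

lemma fps_neg_power_nth:
  fixes B :: "'a::comm_ring_1 fps"
  shows "(- B) ^ m $ n = (-1) ^ m * B ^ m $ n"
  by (induction m arbitrary: n) (simp_all add: fps_mult_nth sum_distrib_left sum_negf mult_ac)

lemma fps_X_power_times_one_minus_power_nth:
  fixes B :: "'a::comm_ring_1 fps"
  shows "(fps_X ^ k * (1 - B) ^ k) $ (n + k)
       = (\<Sum>j\<le>k. of_nat (k choose j) * (-1) ^ (k - j) * B ^ (k - j) $ n)"
proof -
  have "(1 - B) ^ k = (\<Sum>j\<le>k. of_nat (k choose j) * 1 ^ j * (- B) ^ (k - j))"
    using binomial_ring[of 1 "- B" k] by simp
  then show ?thesis
    by (simp add: fps_X_power_mult_nth fps_sum_nth fps_neg_power_nth mult.assoc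
             flip: fps_of_nat)
qed

lemma deg_exp_nth_0 [simp]: "deg_exp lam $ 0 = 1"
  and deg_exp_nth_Suc_0 [simp]: "deg_exp lam $ Suc 0 = 1"
  by (simp_all add: deg_exp_def dfall_def)

lemma trunc_S2_eq_nth: "trunc_S2 lam n k = fact n / fact k * (deg_exp lam - 1 - fps_X) ^ k $ n"
  by (simp add: trunc_S2_def fps_divide_unit fps_const_inverse field_simps)

theorem theorem7:
  fixes lam :: real and n k :: nat
  assumes "lam \<noteq> 0"
  shows "(\<Sum>j=0..n. of_nat ((n + k) choose j) * trunc_S2 lam (n - j + k) k * deg_bernoulli lam k j)
       = of_nat ((n + k) choose k) *
         (\<Sum>j=0..k. of_nat (k choose j) * (-1) ^ (k - j) * deg_bernoulli lam (k - j) n)"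
proof -
  define B where "B = fps_X / (deg_exp lam - 1)"
  define F where "F = deg_exp lam - 1 - fps_X"
  have "B * (deg_exp lam - 1) = fps_X"
    unfolding B_def by (rule fps_X_divide_times_self) simp_all
  then have "B * F = fps_X * (1 - B)"
    by (simp add: F_def algebra_simps)
  then have BF: "B ^ k * F ^ k = fps_X ^ k * (1 - B) ^ k"
    by (simp flip: power_mult_distrib)
  have "(\<Sum>j=0..n. of_nat ((n + k) choose j) * trunc_S2 lam (n - j + k) k * deg_bernoulli lam k j)
      = fact (n + k) / fact k * (\<Sum>j=0..n. B ^ k $ j * F ^ k $ (n + k - j))"
    unfolding sum_distrib_left
  proof (rule sum.cong)
    fix j assume "j \<in> {0..n}"
    then have "n - j + k = n + k - j" and "real ((n + k) choose j) * fact (n + k - j) * fact j = fact (n + k)"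
      by (simp_all add: binomial_fact)
    then show "of_nat ((n + k) choose j) * trunc_S2 lam (n - j + k) k * deg_bernoulli lam k j
             = fact (n + k) / fact k * (B ^ k $ j * F ^ k $ (n + k - j))"
      by (simp add: trunc_S2_eq_nth deg_bernoulli_def B_def F_def field_simps)
  qed simp
  also have "\<dots> = fact (n + k) / fact k * (fps_X ^ k * (1 - B) ^ k) $ (n + k)"
    by (simp add: fps_mult_power_nth_offset F_def flip: BF)
  also have "\<dots> = fact (n + k) / fact k *
      (\<Sum>j\<le>k. of_nat (k choose j) * (-1) ^ (k - j) * B ^ (k - j) $ n)"
    by (simp only: fps_X_power_times_one_minus_power_nth)
  also have "\<dots> = of_nat ((n + k) choose k) *
         (\<Sum>j=0..k. of_nat (k choose j) * (-1) ^ (k - j) * deg_bernoulli lam (k - j) n)"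
    by (simp add: deg_bernoulli_def binomial_fact atLeast0AtMost sum_distrib_left field_simps
             flip: B_def)
  finally show ?thesis .
qed

end
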